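(* Let $M\in\Lambda_{\mathrm{NF}}$ have blueprint $\alpha$, with $\mathrm{Free}(M)=(x_1,\dots,x_n)$ and $\Omega(x_1,\dots,x_n)=(\chi_1,\dots,\chi_n)$. For each $i\in\{0,\dots,n\}$, let $\alpha_i$ be the restriction of $\alpha$ to $\mathrm{dom}(\alpha)\cap\{a : \mathrm{Free}(M|_a)\subseteq\{x_1,\dots,x_i\}\}$, and let $\beta_i$ be the blueprint of $\lambda x_{i+1}\dots x_n.M$. Then: (1) for each $i\in\{0,\dots,n\}$, $\mathrm{dom}(\beta_i)=\{1^{n-i}\cdot a : a\in\mathrm{dom}(\alpha_i)\}$ and $\beta_i|_{1^{n-i}}=\alpha_i$, where $1^k$ denotes the address consisting of $k$ ones; (2) for each $i\in\{1,\dots,n\}$: (a) there exist addresses $a^i_0,\dots,a^i_{p_i}$ with $\{a^i_0,\dots,a^i_{p_i}\}=\{a : M|_a=x_i\}$ and $\alpha_i\rhd^{a^i_0}_{\chi_i}\cdots\rhd^{a^i_{p_i}}_{\chi_i}\alpha_{i-1}$; (b) if $\{b_0,\dots,b_{p_i}\}=\{a : M|_a=x_i\}$ and $\alpha_i\rhd^{b_0}_{\chi_i}\cdots\rhd^{b_{p_i}}_{\chi_i}\alpha'$, then $\alpha'=\alpha_{i-1}$; (3) $(\chi_1,\dots,\chi_n)\in\mathbb F(\alpha)$.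
   Context: Formulas are built from atoms with $\to$. Let $\mathcal X$ be a countably infinite set of variables with an injective map $\mathcal O:\mathcal X\to\mathbb N$; $x<y$ iff $\mathcal O(x)<\mathcal O(y)$. Terms are pure $\lambda$-terms over $\mathcal X$, not identified up to $\alpha$-conversion; no two $\lambda$'s bind the same variable and no variable is both free and bound. $\mathrm{Free}(M)$ is the strictly increasing sequence of free variables of $M$. HRM terms: variables; $\lambda x.M$ with $M$ HRM and $x$ the greatest free variable of $M$; $(MN)$ with $M,N$ HRM and every free variable of $M$ $\le$ some free variable of $N$. Fix $\Omega$ from variables to formulas with each $\Omega^{-1}(\phi)$ infinite; $\Omega(x_1,\dots,x_n)=(\Omega(x_1),\dots,\Omega(x_n))$. Typing: $x:\Omega(x)$; $\lambda x.M:\chi\to\psi$ if $x:\chi$, $M:\psi$, $\lambda x.M$ HRM; $(MN):\psi$ if $M:\chi\to\psi$, $N:\chi$, $(MN)$ HRM. $\Lambda_{\mathrm{NF}}$ is the set of typed $\beta$-normal terms. Addresses are finite sequences of positive integers with prefix order $\le$, concatenation $\cdot$, empty address $\varepsilon$. Terms are identified with trees: $x$ is $\varepsilon\mapsto x$; $\lambda x.M$ maps $\varepsilon$ to $\lambda x$ with subtree $M$ at $(1)$; $(M_1M_2)$ maps $\varepsilon$ to $@$ with subtrees $M_1,M_2$ at $(1),(2)$; $M|_a$ is the subterm at $a$. For a partial tree $\pi$, $\pi|_a$ is $c\mapsto\pi(a\cdot c)$. Let $\mathfrak S$ consist of all formulas (arity 0) and symbols $@_\phi$ (arity 2). A blueprint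 is a finite partial tree with values in $\mathfrak S$ such that if $\alpha(a)=@_\phi$ then $\alpha|_{a\cdot(1)},\alpha|_{a\cdot(2)}$ are non-empty. Notation: $\emptyset_{\mathbb B}$ empty blueprint; $\phi$ denotes $\varepsilon\mapsto\phi$; $@_\phi(\alpha_1,\alpha_2)$ ($\alpha_i$ non-empty) has root $@_\phi$ and $\alpha_i$ at $(i)$; for pairwise incomparable $\bar a=(a_1,\dots,a_k)$, $*_{\bar a}(\alpha_1,\dots,\alpha_k)$ is the blueprint of minimal domain with restriction $\alpha_i$ at $a_i$; $*(\alpha_1,\dots,\alpha_k)=*_{((1),\dots,(k))}(\dots)$. The stable part of $M\in\Lambda_{\mathrm{NF}}$ is the set of $a\in\mathrm{dom}(M)$ with $\mathrm{Free}(M|_a)\subseteq\mathrm{Free}(M)$ and $M|_a$ a variable or an application. The blueprint of $M$ maps each $a$ in the stable part to $\psi$ if $M|_a$ is a variable of type $\psi$, and to $@_\psi$ if $M|_a$ is an application of type $\psi$. Extraction $\alpha\rhd^a_\phi\beta$: (1) $\phi\rhd^\varepsilon_\phi\emptyset_{\mathbb B}$; (2) if $\alpha\rhd^a_\phi\beta$ ($\gamma,\alpha$ non-empty) then $@_\psi(\gamma,\alpha)\rhd^{(2)\cdot a}_\phi*(\gamma,\beta)$; (3) if $\alpha\rhd^a_\phi\beta$, $b\ne\varepsilon$, $(b,c_1,\dots,c_k)$ pairwise incomparable, then $*_{(b,c_1,\dots,c_k)}(\alpha,\gamma_1,\dots,\gamma_k)\rhd^{b\cdot a}_\phi*_{(b,c_1,\dots,c_k)}(\beta,\gamma_1,\dots,\gamma_k)$.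 Write $\alpha\rhd_\phi\beta$ if $\alpha\rhd^a_\phi\beta$ for some $a$, and $\rhd^+_\phi$ for its transitive closure. $\mathbb F(\alpha)$ is the set of sequences $(\phi_1,\dots,\phi_n)$ ($n\ge0$) such that $\alpha\rhd^+_{\phi_n}\cdots\rhd^+_{\phi_1}\emptyset_{\mathbb B}$ (through some intermediate blueprints). *)

theory Defs
  imports Main "HOL-Library.Sublist"
begin

datatype 'a form = Atom 'a | Imp "'a form" "'a form"

text \<open>Pure lambda-terms over a variable type 'v (not identified up to alpha).\<close>
datatype 'v trm = Var 'v | Lam 'v "'v trm" | App "'v trm" "'v trm"

fun fv :: "'v trm \<Rightarrow> 'v set" where
  "fv (Var x) = {x}"
| "fv (Lam x M) = fv M - {x}"
| "fv (App M N) = fv M \<union> fv N"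

fun bvl :: "'v trm \<Rightarrow> 'v list" where
  "bvl (Var x) = []"
| "bvl (Lam x M) = x # bvl M"
| "bvl (App M N) = bvl M @ bvl N"

definition wfterm :: "'v trm \<Rightarrow> bool" where
  "wfterm M \<longleftrightarrow> distinct (bvl M) \<and> set (bvl M) \<inter> fv M = {}"

definition freelist :: "('v \<Rightarrow> nat) \<Rightarrow> 'v trm \<Rightarrow> 'v list" where
  "freelist ord M = (THE xs. set xs = fv M \<and> sorted_wrt (\<lambda>x y. ord x < ord y) xs)"

fun HRM :: "('v \<Rightarrow> nat) \<Rightarrow> 'v trm \<Rightarrow> bool" where
  "HRM ord (Var x) = True"
| "HRM ord (Lam x M) \<longleftrightarrow> HRM ord M \<and> x \<in> fv M \<and> (\<forall>y\<in>fv M. ord y \<le> ord x)"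
| "HRM ord (App M N) \<longleftrightarrow> HRM ord M \<and> HRM ord N \<and> (\<forall>y\<in>fv M. \<exists>z\<in>fv N. ord y \<le> ord z)"

inductive typed :: "('v \<Rightarrow> nat) \<Rightarrow> ('v \<Rightarrow> 'a form) \<Rightarrow> 'v trm \<Rightarrow> 'a form \<Rightarrow> bool"
  for ord :: "'v \<Rightarrow> nat" and \<Omega> :: "'v \<Rightarrow> 'a form" where
  tVar: "typed ord \<Omega> (Var x) (\<Omega> x)"
| tLam: "typed ord \<Omega> M \<psi> \<Longrightarrow> HRM ord (Lam x M) \<Longrightarrow> typed ord \<Omega> (Lam x M) (Imp (\<Omega> x) \<psi>)"
| tApp: "typed ord \<Omega> M (Imp \<chi> \<psi>) \<Longrightarrow> typed ord \<Omega> N \<chi> \<Longrightarrow> HRM ord (App M N) \<Longrightarrow>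
         typed ord \<Omega> (App M N) \<psi>"

fun beta_normal :: "'v trm \<Rightarrow> bool" where
  "beta_normal (Var x) = True"
| "beta_normal (Lam x M) = beta_normal M"
| "beta_normal (App (Lam x M) N) = False"
| "beta_normal (App M N) = (beta_normal M \<and> beta_normal N)"

definition in_LambdaNF :: "('v \<Rightarrow> nat) \<Rightarrow> ('v \<Rightarrow> 'a form) \<Rightarrow> 'v trm \<Rightarrow> bool" where
  "in_LambdaNF ord \<Omega> M \<longleftrightarrow> wfterm M \<and> (\<exists>\<psi>. typed ord \<Omega> M \<psi>) \<and> beta_normal M"

fun lams :: "'v list \<Rightarrow> 'v trm \<Rightarrow> 'v trm" where
  "lams [] M = M"
| "lams (y # ys) M = Lam y (lams ys M)"

type_synonym addr = "nat list"

fun sub :: "'v trm \<Rightarrow> addr \<Rightarrow> 'v trm option" where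
  "sub M [] = Some M"
| "sub (Lam x M) (k # a) = (if k = 1 then sub M a else None)"
| "sub (App M N) (k # a) = (if k = 1 then sub M a else if k = 2 then sub N a else None)"
| "sub (Var x) (k # a) = None"

datatype 'a sym = Fm "'a form" | AppS "'a form"

type_synonym 'a bp = "addr \<Rightarrow> 'a sym option"

definition at_addr :: "'a bp \<Rightarrow> addr \<Rightarrow> 'a bp" where
  "at_addr \<pi> a = (\<lambda>c. \<pi> (a @ c))"

definition is_bp :: "'a bp \<Rightarrow> bool" where
  "is_bp \<alpha> \<longleftrightarrow> finite (dom \<alpha>) \<and> (\<forall>a\<in>dom \<alpha>. \<forall>k\<in>set a. 0 < k) \<and>
     (\<forall>a \<phi>. \<alpha> a = Some (AppS \<phi>) \<longrightarrow>
        at_addr \<alpha> (a @ [1]) \<noteq> Map.empty \<and> at_addr \<alpha> (a @ [2]) \<noteq> Map.empty)"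

definition leaf :: "'a form \<Rightarrow> 'a bp" where
  "leaf \<phi> = [[] \<mapsto> Fm \<phi>]"

definition appbp :: "'a form \<Rightarrow> 'a bp \<Rightarrow> 'a bp \<Rightarrow> 'a bp" where
  "appbp \<psi> \<alpha>1 \<alpha>2 = (\<lambda>c. case c of [] \<Rightarrow> Some (AppS \<psi>)
       | k # d \<Rightarrow> (if k = 1 then \<alpha>1 d else if k = 2 then \<alpha>2 d else None))"

definition pairwise_incomparable :: "addr list \<Rightarrow> bool" where
  "pairwise_incomparable as \<longleftrightarrow>
     (\<forall>i<length as. \<forall>j<length as. i \<noteq> j \<longrightarrow> \<not> prefix (as ! i) (as ! j))"

text \<open>*_{as}(als): the blueprint of minimal domain whose restriction at as!i is als!i
  (as pairwise incomparable, same length as als).\<close>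
definition starbp :: "addr list \<Rightarrow> 'a bp list \<Rightarrow> 'a bp" where
  "starbp as als = (\<lambda>c. if \<exists>i<length as. prefix (as ! i) c
       then (let i = (SOME i. i < length as \<and> prefix (as ! i) c)
             in (als ! i) (drop (length (as ! i)) c))
       else None)"

definition starstd :: "'a bp list \<Rightarrow> 'a bp" where
  "starstd als = starbp (map (\<lambda>i. [Suc i]) [0..<length als]) als"

text \<open>Extraction  alpha \<rhd>^a_phi beta  is written  extr alpha a phi beta.\<close>
inductive extr :: "'a bp \<Rightarrow> addr \<Rightarrow> 'a form \<Rightarrow> 'a bp \<Rightarrow> bool" where
  ext_leaf: "extr (leaf \<phi>) [] \<phi> Map.empty"
| ext_app: "extr \<alpha> a \<phi> \<beta> \<Longrightarrow> is_bp \<gamma> \<Longrightarrow> \<gamma> \<noteq> Map.empty \<Longrightarrow> \<alpha> \<noteq> Map.empty \<Longrightarrow>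
            extr (appbp \<psi> \<gamma> \<alpha>) (2 # a) \<phi> (starstd [\<gamma>, \<beta>])"
| ext_star: "extr \<alpha> a \<phi> \<beta> \<Longrightarrow> b \<noteq> [] \<Longrightarrow> pairwise_incomparable (b # cs) \<Longrightarrow>
             length gs = length cs \<Longrightarrow> (\<forall>g\<in>set gs. is_bp g) \<Longrightarrow>
             extr (starbp (b # cs) (\<alpha> # gs)) (b @ a) \<phi> (starbp (b # cs) (\<beta> # gs))"

definition extr_any :: "'a form \<Rightarrow> 'a bp \<Rightarrow> 'a bp \<Rightarrow> bool" where
  "extr_any \<phi> \<alpha> \<beta> \<longleftrightarrow> (\<exists>a. extr \<alpha> a \<phi> \<beta>)"

fun extr_chain :: "'a bp \<Rightarrow> addr list \<Rightarrow> 'a form \<Rightarrow> 'a bp \<Rightarrow> bool" where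
  "extr_chain \<alpha> [] \<phi> \<beta> \<longleftrightarrow> \<alpha> = \<beta>"
| "extr_chain \<alpha> (a # as) \<phi> \<beta> \<longleftrightarrow> (\<exists>\<gamma>. extr \<alpha> a \<phi> \<gamma> \<and> extr_chain \<gamma> as \<phi> \<beta>)"

text \<open>F(alpha): (phi1,...,phin) with alpha \<rhd>+_{phin} ... \<rhd>+_{phi1} empty.\<close>
inductive inF :: "'a bp \<Rightarrow> 'a form list \<Rightarrow> bool" where
  inF_nil: "inF Map.empty []"
| inF_snoc: "(extr_any \<phi>)\<^sup>+\<^sup>+ \<alpha> \<beta> \<Longrightarrow> inF \<beta> \<phi>s \<Longrightarrow> inF \<alpha> (\<phi>s @ [\<phi>])"

definition FF :: "'a bp \<Rightarrow> 'a form list set" where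
  "FF \<alpha> = {\<phi>s. inF \<alpha> \<phi>s}"

definition blueprint :: "('v \<Rightarrow> nat) \<Rightarrow> ('v \<Rightarrow> 'a form) \<Rightarrow> 'v trm \<Rightarrow> 'a bp" where
  "blueprint ord \<Omega> M = (\<lambda>a. case sub M a of
      None \<Rightarrow> None
    | Some N \<Rightarrow> (if fv N \<subseteq> fv M then
        (case N of Var x \<Rightarrow> Some (Fm (THE \<psi>. typed ord \<Omega> N \<psi>))
                 | App _ _ \<Rightarrow> Some (AppS (THE \<psi>. typed ord \<Omega> N \<psi>))
                 | Lam _ _ \<Rightarrow> None)
        else None))"

definition restr_free :: "'v trm \<Rightarrow> 'a bp \<Rightarrow> 'v set \<Rightarrow> 'a bp" where
  "restr_free M \<alpha> V = \<alpha> |` {a. \<exists>N. sub M a = Some N \<and> fv N \<subseteq> V}"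

end

theory Submission
  imports Defs "HOL-Library.List_Lexorder"
begin

(*
  Write \<alpha>\<^sub>V for the part of the blueprint of M at subterms whose free variables lie in V, and let
  x be the greatest variable of V. The occurrences of x can be extracted from \<alpha>\<^sub>V one at a time in
  decreasing lexicographic order. When o is the greatest occurrence not yet extracted, every
  application node still present above o has o in its argument: an occurrence of x in the function
  part P of an application P Q forces, by the HRM condition, a free variable of Q that is at least
  x, hence x itself, hence a lexicographically greater occurrence, which has already been extracted
  together with the node. Extraction can descend along exactly such paths, and since extracting at
  an address deletes precisely its prefixes, what is left after all occurrences of x is the part
  for V - {x}, whatever the order. Iterating over x_n, ..., x_1 gives (\<chi>_1, ..., \<chi>_n) \<in> F(\<alpha>);
  abstracting x_{i+1}, ..., x_n merely shifts \<alpha>_i along the spine 1^(n-i).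
*)

section \<open>Star blueprints and extraction\<close>

lemma starbp_at:
  assumes "pairwise_incomparable as" "i < length as" "prefix (as ! i) c"
  shows "starbp as als c = (als ! i) (drop (length (as ! i)) c)"
proof -
  have "j = i" if "j < length as" "prefix (as ! j) c" for j
  proof (rule ccontr)
    assume "j \<noteq> i"
    then have "\<not> prefix (as ! j) (as ! i)" "\<not> prefix (as ! i) (as ! j)"
      using assms(1,2) that(1) unfolding pairwise_incomparable_def by auto
    with prefix_same_cases[OF that(2) assms(3)] show False by blast
  qed
  then have "(SOME j. j < length as \<and> prefix (as ! j) c) = i"
    using assms(2,3) by (metis (mono_tags, lifting) some_equality)
  then show ?thesis using assms unfolding starbp_def by (auto simp: Let_def)
qed

lemma starbp_outside: "\<not> (\<exists>i<length as. prefix (as ! i) c) \<Longrightarrow> starbp as als c = None"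
  unfolding starbp_def by auto

lemma starbp_pair:
  assumes "k \<noteq> k'"
  shows "starbp [[k], [k']] [g, h] c =
    (case c of [] \<Rightarrow> None | j # d \<Rightarrow> if j = k then g d else if j = k' then h d else None)"
proof -
  have inc: "pairwise_incomparable [[k], [k']]"
    using assms by (auto simp: pairwise_incomparable_def less_Suc_eq)
  show ?thesis
  proof (cases c)
    case (Cons j d)
    consider "j = k" | "j = k'" | "j \<noteq> k" "j \<noteq> k'" by blast
    then show ?thesis
    proof cases
      case 1
      then show ?thesis using starbp_at[OF inc, of 0 c "[g, h]"] Cons by simp
    next
      case 2
      then show ?thesis using starbp_at[OF inc, of 1 c "[g, h]"] Cons assms by simp
    next
      case 3
      then show ?thesis using Cons by (auto intro!: starbp_outside simp: less_Suc_eq)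
    qed
  qed (auto intro!: starbp_outside simp: less_Suc_eq)
qed

lemma starstd_pair:
  "starstd [g, h] c = (case c of [] \<Rightarrow> None | j # d \<Rightarrow> if j = 1 then g d else if j = 2 then h d else None)"
proof -
  have "starstd [g, h] = starbp [[1], [2]] [g, h]"
    unfolding starstd_def by (simp add: eval_nat_numeral)
  then show ?thesis using starbp_pair[of 1 2 g h c] by simp
qed

lemma extr_eq_restrict: "extr \<tau> a \<phi> \<beta> \<Longrightarrow> \<beta> = \<tau> |` {c. \<not> prefix c a}"
proof (induction rule: extr.induct)
  case (ext_leaf \<phi>)
  then show ?case by (auto simp: leaf_def restrict_map_def fun_eq_iff)
next
  case (ext_app \<alpha> a \<phi> \<beta> \<gamma> \<psi>)
  show ?case
  proof
    fix c
    show "starstd [\<gamma>, \<beta>] c = (appbp \<psi> \<gamma> \<alpha> |` {c. \<not> prefix c (2 # a)}) c"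
      unfolding starstd_pair ext_app.IH by (cases c) (auto simp: appbp_def restrict_map_def)
  qed
next
  case (ext_star \<alpha> a \<phi> \<beta> b cs gs)
  show ?case
  proof
    fix c
    show "starbp (b # cs) (\<beta> # gs) c = (starbp (b # cs) (\<alpha> # gs) |` {c. \<not> prefix c (b @ a)}) c"
    proof (cases "\<exists>i<length (b # cs). prefix ((b # cs) ! i) c")
      case True
      then obtain i where i: "i < length (b # cs)" "prefix ((b # cs) ! i) c" by blast
      note at = starbp_at[OF ext_star.hyps(3) i]
      show ?thesis
      proof (cases i)
        case 0
        then obtain d where "c = b @ d" using i by (auto simp: prefix_def)
        with 0 show ?thesis using at[of "\<beta> # gs"] at[of "\<alpha> # gs"] ext_star.IH
          by (auto simp: restrict_map_def)
      next
        case (Suc j)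
        have "\<not> prefix c (b @ a)"
        proof
          assume "prefix c (b @ a)"
          with i(2) have "prefix ((b # cs) ! i) (b @ a)" by (rule prefix_order.trans)
          moreover have "prefix ((b # cs) ! 0) (b @ a)" by simp
          ultimately have "prefix ((b # cs) ! i) ((b # cs) ! 0) \<or> prefix ((b # cs) ! 0) ((b # cs) ! i)"
            by (rule prefix_same_cases)
          with ext_star.hyps(3) i(1) Suc
          show False unfolding pairwise_incomparable_def
            by (metis length_greater_0_conv list.discI nat.distinct(1))
        qed
        with Suc show ?thesis using at[of "\<beta> # gs"] at[of "\<alpha> # gs"] by (auto simp: restrict_map_def)
      qed
    qed (simp add: starbp_outside restrict_map_def)
  qed
qed

lemma extr_chain_eq_restrict:
  "extr_chain \<tau> as \<phi> \<beta> \<Longrightarrow> \<beta> = \<tau> |` {c. \<forall>b\<in>set as. \<not> prefix c b}"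
proof (induction as arbitrary: \<tau>)
  case (Cons a as)
  then obtain \<gamma> where "extr \<tau> a \<phi> \<gamma>" "extr_chain \<gamma> as \<phi> \<beta>" by auto
  with extr_eq_restrict Cons.IH have "\<gamma> = \<tau> |` {c. \<not> prefix c a}"
    and "\<beta> = \<gamma> |` {c. \<forall>b\<in>set as. \<not> prefix c b}" by blast+
  then show ?case by (auto simp: restrict_map_def fun_eq_iff)
qed (simp add: restrict_map_def)

lemma extr_chain_tranclp: "extr_chain \<tau> (a # as) \<phi> \<beta> \<Longrightarrow> (extr_any \<phi>)\<^sup>+\<^sup>+ \<tau> \<beta>"
proof (induction as arbitrary: \<tau> a)
  case (Cons b as)
  then obtain \<gamma> where "extr \<tau> a \<phi> \<gamma>" "extr_chain \<gamma> (b # as) \<phi> \<beta>" by auto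
  with Cons.IH show ?case by (meson extr_any_def tranclp.r_into_trancl tranclp_trans)
qed (metis extr_chain.simps extr_any_def tranclp.r_into_trancl)

lemma is_bp_at_addr: "is_bp \<tau> \<Longrightarrow> is_bp (at_addr \<tau> c)"
proof -
  assume b: "is_bp \<tau>"
  have "dom (at_addr \<tau> c) = (\<lambda>d. c @ d) -` dom \<tau>" by (auto simp: at_addr_def)
  moreover have "finite ((\<lambda>d. c @ d) -` dom \<tau>)" using b by (intro finite_vimageI) (auto simp: is_bp_def inj_on_def)
  ultimately have "finite (dom (at_addr \<tau> c))" by simp
  moreover have "\<forall>a\<in>dom (at_addr \<tau> c). \<forall>k\<in>set a. 0 < k"
  proof (intro ballI)
    fix a k assume "a \<in> dom (at_addr \<tau> c)" "k \<in> set a"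
    then have "c @ a \<in> dom \<tau>" "k \<in> set (c @ a)" by (auto simp: at_addr_def)
    with b show "0 < k" by (auto simp: is_bp_def)
  qed
  moreover have "\<forall>a \<phi>. at_addr \<tau> c a = Some (AppS \<phi>) \<longrightarrow>
        at_addr (at_addr \<tau> c) (a @ [1]) \<noteq> Map.empty \<and> at_addr (at_addr \<tau> c) (a @ [2]) \<noteq> Map.empty"
    using b unfolding is_bp_def at_addr_def by (metis append.assoc)
  ultimately show ?thesis unfolding is_bp_def by blast
qed

lemma is_bp_restrict_upclosed:
  assumes "is_bp \<tau>" and upclosed: "\<And>q d. q \<in> R \<Longrightarrow> prefix q d \<Longrightarrow> d \<in> R"
  shows "is_bp (\<tau> |` R)"
  unfolding is_bp_def
proof (intro conjI allI impI ballI)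
  show "finite (dom (\<tau> |` R))" using assms(1) by (auto simp: is_bp_def)
next
  fix a k assume "a \<in> dom (\<tau> |` R)" "k \<in> set a"
  then show "0 < k" using assms(1) unfolding is_bp_def by (metis dom_restrict IntD1)
next
  fix a \<phi> assume "(\<tau> |` R) a = Some (AppS \<phi>)"
  then have aR: "a \<in> R" and "\<tau> a = Some (AppS \<phi>)" by (auto simp: restrict_map_def split: if_splits)
  then have children: "at_addr \<tau> (a @ [1]) \<noteq> Map.empty" "at_addr \<tau> (a @ [2]) \<noteq> Map.empty"
    using assms(1) unfolding is_bp_def by auto
  have "at_addr (\<tau> |` R) (a @ [j]) \<noteq> Map.empty" if "at_addr \<tau> (a @ [j]) \<noteq> Map.empty" for j
  proof -
    from that obtain d where "\<tau> (a @ [j] @ d) \<noteq> None" by (auto simp: at_addr_def fun_eq_iff)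
    moreover have "a @ [j] @ d \<in> R" using upclosed aR by (metis prefix_def)
    ultimately show ?thesis by (auto simp: at_addr_def fun_eq_iff restrict_map_def)
  qed
  with children show "at_addr (\<tau> |` R) (a @ [1]) \<noteq> Map.empty" "at_addr (\<tau> |` R) (a @ [2]) \<noteq> Map.empty"
    by auto
qed

text \<open>Nodes on the path that are absent from \<open>\<tau>\<close> are allowed: rule \<open>ext_star\<close> descends through them.\<close>

definition right_branching :: "'a bp \<Rightarrow> addr \<Rightarrow> bool" where
  "right_branching \<tau> a \<longleftrightarrow> (\<forall>p k r. a = p @ k # r \<longrightarrow> \<tau> p \<noteq> None \<longrightarrow>
     k = 2 \<and> (\<exists>\<psi>. \<tau> p = Some (AppS \<psi>)) \<and> at_addr \<tau> (p @ [1]) \<noteq> Map.empty)"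

lemma right_branching_at_addr:
  "right_branching \<tau> (k # r) \<Longrightarrow> right_branching (at_addr \<tau> [k]) r"
  unfolding right_branching_def
proof (intro allI impI)
  fix p j s
  assume "\<forall>p j s. k # r = p @ j # s \<longrightarrow> \<tau> p \<noteq> None \<longrightarrow>
            j = 2 \<and> (\<exists>\<psi>. \<tau> p = Some (AppS \<psi>)) \<and> at_addr \<tau> (p @ [1]) \<noteq> Map.empty"
    and "r = p @ j # s" "at_addr \<tau> [k] p \<noteq> None"
  then show "j = 2 \<and> (\<exists>\<psi>. at_addr \<tau> [k] p = Some (AppS \<psi>)) \<and> at_addr (at_addr \<tau> [k]) (p @ [1]) \<noteq> Map.empty"
    by (auto simp: at_addr_def dest!: spec[of _ "k # p"])
qed

lemma at_addr_nonempty: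
  assumes "\<tau> (a @ j # h) \<noteq> None"
  shows "at_addr \<tau> (a @ [j]) \<noteq> Map.empty"
proof
  assume "at_addr \<tau> (a @ [j]) = Map.empty"
  then have "at_addr \<tau> (a @ [j]) h = None" by simp
  with assms show False by (simp add: at_addr_def)
qed

lemma binary_dom_None:
  assumes "\<forall>c\<in>dom \<tau>. set c \<subseteq> {1, 2}" "j \<noteq> 1" "j \<noteq> 2"
  shows "\<tau> (j # d) = None"
proof (rule ccontr)
  assume "\<tau> (j # d) \<noteq> None"
  with assms(1) have "set (j # d) \<subseteq> {1, 2}" by blast
  with assms(2,3) show False by simp
qed

lemma binary_eq_appbp:
  assumes "\<forall>c\<in>dom \<tau>. set c \<subseteq> {1, 2}" "\<tau> [] = Some (AppS \<psi>)"
  shows "\<tau> = appbp \<psi> (at_addr \<tau> [1]) (at_addr \<tau> [2])"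
proof
  fix c show "\<tau> c = appbp \<psi> (at_addr \<tau> [1]) (at_addr \<tau> [2]) c"
    using assms binary_dom_None[OF assms(1)] by (cases c) (auto simp: appbp_def at_addr_def)
qed

lemma binary_eq_starbp:
  assumes "\<forall>c\<in>dom \<tau>. set c \<subseteq> {1, 2}" "\<tau> [] = None" "k \<in> {1, 2}"
  shows "\<tau> = starbp [[k], [3 - k]] [at_addr \<tau> [k], at_addr \<tau> [3 - k]]"
proof
  have "k \<noteq> 3 - k" using assms(3) by auto
  fix c show "\<tau> c = starbp [[k], [3 - k]] [at_addr \<tau> [k], at_addr \<tau> [3 - k]] c"
    unfolding starbp_pair[OF \<open>k \<noteq> 3 - k\<close>]
    using assms binary_dom_None[OF assms(1)] by (cases c) (auto simp: at_addr_def)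
qed

lemma extr_exists_right_branching:
  assumes "\<tau> a = Some (Fm \<phi>)" "\<forall>d. d \<noteq> [] \<longrightarrow> \<tau> (a @ d) = None" "right_branching \<tau> a"
    and "is_bp \<tau>" "\<forall>c\<in>dom \<tau>. set c \<subseteq> {1, 2}"
  shows "\<exists>\<beta>. extr \<tau> a \<phi> \<beta>"
  using assms
proof (induction a arbitrary: \<tau>)
  case Nil
  have "\<tau> = leaf \<phi>"
  proof
    fix c show "\<tau> c = leaf \<phi> c" using Nil(1,2) by (cases c) (auto simp: leaf_def)
  qed
  then show ?case using ext_leaf by blast
next
  case (Cons k r)
  let ?\<alpha> = "at_addr \<tau> [k]"
  have "\<exists>\<beta>. extr ?\<alpha> r \<phi> \<beta>"
  proof (rule Cons.IH)
    show "?\<alpha> r = Some (Fm \<phi>)" "\<forall>d. d \<noteq> [] \<longrightarrow> ?\<alpha> (r @ d) = None"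
      using Cons.prems(1,2) by (simp_all add: at_addr_def)
    show "right_branching ?\<alpha> r" using Cons.prems(3) by (rule right_branching_at_addr)
    show "is_bp ?\<alpha>" using Cons.prems(4) by (rule is_bp_at_addr)
    show "\<forall>c\<in>dom ?\<alpha>. set c \<subseteq> {1, 2}"
    proof
      fix c assume "c \<in> dom ?\<alpha>"
      then have "k # c \<in> dom \<tau>" by (auto simp: at_addr_def)
      with Cons.prems(5) have "set (k # c) \<subseteq> {1, 2}" by blast
      then show "set c \<subseteq> {1, 2}" by simp
    qed
  qed
  then obtain \<beta> where IH: "extr ?\<alpha> r \<phi> \<beta>" ..
  have "k # r \<in> dom \<tau>" using Cons.prems(1) by auto
  with Cons.prems(5) have "set (k # r) \<subseteq> {1, 2}" by blast
  then have k: "k \<in> {1, 2}" by simp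
  show ?case
  proof (cases "\<tau> [] = None")
    case False
    with Cons.prems(3) obtain \<psi> where k2: "k = 2" and root: "\<tau> [] = Some (AppS \<psi>)"
      and left: "at_addr \<tau> [1] \<noteq> Map.empty"
      unfolding right_branching_def by (metis append_Nil)
    have "?\<alpha> \<noteq> Map.empty" using Cons.prems(1) by (auto simp: at_addr_def fun_eq_iff)
    with IH k2 left have "extr (appbp \<psi> (at_addr \<tau> [1]) (at_addr \<tau> [2])) (2 # r) \<phi>
        (starstd [at_addr \<tau> [1], \<beta>])"
      using ext_app is_bp_at_addr[OF Cons.prems(4)] by blast
    then show ?thesis using binary_eq_appbp[OF Cons.prems(5) root] k2 by auto
  next
    case True
    have "pairwise_incomparable [[k], [3 - k]]"
      using k by (auto simp: pairwise_incomparable_def less_Suc_eq)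
    with IH have "extr (starbp [[k], [3 - k]] [?\<alpha>, at_addr \<tau> [3 - k]]) ([k] @ r) \<phi>
        (starbp [[k], [3 - k]] [\<beta>, at_addr \<tau> [3 - k]])"
      using ext_star[of ?\<alpha> r \<phi> \<beta> "[k]" "[[3 - k]]" "[at_addr \<tau> [3 - k]]"]
        is_bp_at_addr[OF Cons.prems(4)] by auto
    then show ?thesis using binary_eq_starbp[OF Cons.prems(5) True k] by auto
  qed
qed

corollary extr_right_branching:
  assumes "\<tau> a = Some (Fm \<phi>)" "\<forall>d. d \<noteq> [] \<longrightarrow> \<tau> (a @ d) = None" "right_branching \<tau> a"
    and "is_bp \<tau>" "\<forall>c\<in>dom \<tau>. set c \<subseteq> {1, 2}"
  shows "extr \<tau> a \<phi> (\<tau> |` {c. \<not> prefix c a})"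
  using extr_exists_right_branching[OF assms] extr_eq_restrict by blast

section \<open>Terms and their subterms\<close>

lemma sub_append: "sub M a = Some N \<Longrightarrow> sub M (a @ c) = sub N c"
  by (induction M a rule: sub.induct) (auto split: if_splits)

lemma sub_Var_append: "sub M a = Some (Var x) \<Longrightarrow> c \<noteq> [] \<Longrightarrow> sub M (a @ c) = None"
  by (cases c) (auto simp: sub_append)

lemma sub_binary: "sub M a \<noteq> None \<Longrightarrow> set a \<subseteq> {1, 2}"
  by (induction M a rule: sub.induct) (auto split: if_splits)

lemma finite_sub_dom: "finite {a. sub M a \<noteq> None}"
proof (induction M)
  case (Var x)
  have "{a. sub (Var x) a \<noteq> None} \<subseteq> {[]}" by (auto elim: sub.elims)
  then show ?case using finite_subset by blast
next
  case (Lam x M)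
  have "{a. sub (Lam x M) a \<noteq> None} \<subseteq> insert [] (Cons 1 ` {a. sub M a \<noteq> None})"
  proof
    fix a assume "a \<in> {a. sub (Lam x M) a \<noteq> None}"
    then show "a \<in> insert [] (Cons 1 ` {a. sub M a \<noteq> None})"
      by (cases a) (auto split: if_splits)
  qed
  then show ?case using finite_subset Lam by blast
next
  case (App M N)
  have "{a. sub (App M N) a \<noteq> None} \<subseteq>
      insert [] (Cons 1 ` {a. sub M a \<noteq> None} \<union> Cons 2 ` {a. sub N a \<noteq> None})"
  proof
    fix a assume "a \<in> {a. sub (App M N) a \<noteq> None}"
    then show "a \<in> insert [] (Cons 1 ` {a. sub M a \<noteq> None} \<union> Cons 2 ` {a. sub N a \<noteq> None})"
      by (cases a) (auto split: if_splits)
  qed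
  then show ?case using finite_subset App by blast
qed

lemma fv_imp_occurrence: "x \<in> fv N \<Longrightarrow> \<exists>d. sub N d = Some (Var x)"
proof (induction N)
  case (Var y) then show ?case by (auto intro: exI[of _ "[]"])
next
  case (Lam y M)
  then obtain d where "sub M d = Some (Var x)" by auto
  then show ?case by (auto intro: exI[of _ "1 # d"])
next
  case (App M N)
  show ?case
  proof (cases "x \<in> fv M")
    case True
    with App obtain d where "sub M d = Some (Var x)" by auto
    then show ?thesis by (auto intro: exI[of _ "1 # d"])
  next
    case False
    with App obtain d where "sub N d = Some (Var x)" by auto
    then show ?thesis by (auto intro: exI[of _ "2 # d"])
  qed
qed

lemma occurrence_imp_fv: "sub N d = Some (Var x) \<Longrightarrow> x \<notin> set (bvl N) \<Longrightarrow> x \<in> fv N"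
  by (induction N d rule: sub.induct) (auto split: if_splits)

lemma bvl_sub: "sub M a = Some N \<Longrightarrow> set (bvl N) \<subseteq> set (bvl M)"
  by (induction M a rule: sub.induct) (auto split: if_splits)

lemma finite_fv: "finite (fv M)"
  by (induction M) auto

lemma fv_lams: "fv (lams ys M) = fv M - set ys"
  by (induction ys) auto

lemma sub_lams: "sub (lams ys M) (replicate (length ys) 1 @ a) = sub M a"
  by (induction ys) auto

lemma sub_lams_off_spine:
  "\<not> (\<exists>a. c = replicate (length ys) 1 @ a) \<Longrightarrow>
    sub (lams ys M) c = None \<or> (\<exists>y L. sub (lams ys M) c = Some (Lam y L))"
proof (induction ys arbitrary: c)
  case (Cons y ys)
  show ?case
  proof (cases c)
    case (Cons k d)
    show ?thesis
    proof (cases "k = 1")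
      case True
      with Cons.prems Cons have "\<not> (\<exists>a. d = replicate (length ys) 1 @ a)" by auto
      from Cons.IH[OF this] show ?thesis using Cons True by simp
    qed (use Cons in simp)
  qed simp
qed simp

inductive_cases typed_LamE: "typed ord \<Omega> (Lam x M) \<psi>"
inductive_cases typed_AppE: "typed ord \<Omega> (App M N) \<psi>"
inductive_cases typed_VarE: "typed ord \<Omega> (Var x) \<psi>"

lemma typed_sub: "typed ord \<Omega> M \<psi> \<Longrightarrow> sub M a = Some N \<Longrightarrow> \<exists>\<psi>'. typed ord \<Omega> N \<psi>'"
  by (induction M a arbitrary: \<psi> rule: sub.induct)
    (auto split: if_splits elim: typed_LamE typed_AppE)

lemma typed_HRM: "typed ord \<Omega> N \<psi> \<Longrightarrow> HRM ord N"
  by (cases rule: typed.cases) auto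

lemma the_typed_Var: "(THE \<psi>. typed ord \<Omega> (Var x) \<psi>) = \<Omega> x"
  by (rule the_equality) (auto intro: typed.tVar elim: typed_VarE)

lemma beta_normal_App:
  "beta_normal (App P Q) \<Longrightarrow> beta_normal P \<and> beta_normal Q \<and> (\<forall>y L. P \<noteq> Lam y L)"
  by (cases P) auto

lemma beta_normal_sub: "beta_normal M \<Longrightarrow> sub M a = Some N \<Longrightarrow> beta_normal N"
proof (induction M a rule: sub.induct)
  case (3 M N k a)
  then show ?case using beta_normal_App[of M N] by (auto split: if_splits)
qed (auto split: if_splits)

lemma beta_normal_head_var:
  "beta_normal P \<Longrightarrow> (\<forall>y L. P \<noteq> Lam y L) \<Longrightarrow>
    \<exists>k z. sub P (replicate k 1) = Some (Var z) \<and> z \<in> fv P"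
proof (induction P)
  case (Var x)
  then show ?case by (auto intro: exI[of _ 0])
next
  case (App P Q)
  from beta_normal_App[OF App.prems(1)] App.IH(1) obtain k z
    where "sub P (replicate k 1) = Some (Var z)" "z \<in> fv P" by auto
  then show ?case by (auto intro!: exI[of _ "Suc k"])
qed auto

lemma set_sorted_freelist:
  assumes "inj ord"
  shows "set (freelist ord M) = fv M \<and> sorted_wrt (\<lambda>x y. ord x < ord y) (freelist ord M)"
proof -
  interpret folding_insort_key "(\<le>) :: nat \<Rightarrow> _" "(<)" "fv M" ord
    by unfold_locales (rule inj_on_subset[OF assms], simp)
  obtain xs where xs: "set xs = fv M \<and> sorted_wrt (\<lambda>x y. ord x < ord y) xs"
    using finite_set_strict_sorted[OF subset_refl finite_fv] by (metis sorted_wrt_map)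
  have "freelist ord M = xs"
    unfolding freelist_def
  proof (rule the_equality)
    fix ys assume "set ys = fv M \<and> sorted_wrt (\<lambda>x y. ord x < ord y) ys"
    then have "map ord ys = map ord xs"
      using xs by (intro strict_sorted_equal) (simp_all add: sorted_wrt_map)
    then show "ys = xs" using assms by (simp add: inj_map_eq_map)
  qed (fact xs)
  with xs show ?thesis by simp
qed

definition occurrences :: "'v trm \<Rightarrow> 'v \<Rightarrow> addr set" where
  "occurrences M x = {a. sub M a = Some (Var x)}"

lemma finite_occurrences: "finite (occurrences M x)"
  by (rule finite_subset[OF _ finite_sub_dom]) (auto simp: occurrences_def)

lemma occurrences_nonempty: "x \<in> fv M \<Longrightarrow> occurrences M x \<noteq> {}"
  using fv_imp_occurrence by (fastforce simp: occurrences_def)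

section \<open>Blueprints of terms\<close>

definition node_sym :: "('v \<Rightarrow> nat) \<Rightarrow> ('v \<Rightarrow> 'a form) \<Rightarrow> 'v trm \<Rightarrow> 'a sym option" where
  "node_sym ord \<Omega> N = (case N of Var x \<Rightarrow> Some (Fm (THE \<psi>. typed ord \<Omega> N \<psi>))
      | App _ _ \<Rightarrow> Some (AppS (THE \<psi>. typed ord \<Omega> N \<psi>)) | Lam _ _ \<Rightarrow> None)"

lemma blueprint_eq:
  "blueprint ord \<Omega> L c =
    (case sub L c of None \<Rightarrow> None | Some N \<Rightarrow> if fv N \<subseteq> fv L then node_sym ord \<Omega> N else None)"
  by (simp add: blueprint_def node_sym_def split: option.split)

lemma restr_free_blueprint_eq:
  "V \<subseteq> fv M \<Longrightarrow> restr_free M (blueprint ord \<Omega> M) V c =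
    (case sub M c of None \<Rightarrow> None | Some N \<Rightarrow> if fv N \<subseteq> V then node_sym ord \<Omega> N else None)"
  by (auto simp: restr_free_def restrict_map_def blueprint_eq split: option.split)

lemma blueprint_lams:
  assumes "fv (lams ys M) = V" "V \<subseteq> fv M"
  shows "dom (blueprint ord \<Omega> (lams ys M))
          = (\<lambda>a. replicate (length ys) 1 @ a) ` dom (restr_free M (blueprint ord \<Omega> M) V)"
    and "at_addr (blueprint ord \<Omega> (lams ys M)) (replicate (length ys) 1)
          = restr_free M (blueprint ord \<Omega> M) V"
proof -
  let ?L = "lams ys M" and ?r = "replicate (length ys) 1"
  have on_spine: "blueprint ord \<Omega> ?L (?r @ a) = restr_free M (blueprint ord \<Omega> M) V a" for a
    unfolding blueprint_eq[of ord \<Omega> ?L] assms(1) restr_free_blueprint_eq[OF assms(2)] sub_lams ..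
  have off_spine: "blueprint ord \<Omega> ?L c = None" if "\<not> (\<exists>a. c = ?r @ a)" for c
    using sub_lams_off_spine[OF that, of M] by (elim disjE exE) (simp_all add: blueprint_eq node_sym_def)
  show "at_addr (blueprint ord \<Omega> ?L) ?r = restr_free M (blueprint ord \<Omega> M) V"
    unfolding at_addr_def on_spine ..
  show "dom (blueprint ord \<Omega> ?L) = (\<lambda>a. ?r @ a) ` dom (restr_free M (blueprint ord \<Omega> M) V)"
  proof (intro equalityI subsetI)
    fix c assume c: "c \<in> dom (blueprint ord \<Omega> ?L)"
    then obtain a where a: "c = ?r @ a" by (metis domIff off_spine)
    with c have "a \<in> dom (restr_free M (blueprint ord \<Omega> M) V)" by (metis domIff on_spine)
    with a show "c \<in> (\<lambda>a. ?r @ a) ` dom (restr_free M (blueprint ord \<Omega> M) V)" by blast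
  next
    fix c assume "c \<in> (\<lambda>a. ?r @ a) ` dom (restr_free M (blueprint ord \<Omega> M) V)"
    then obtain a where "c = ?r @ a" "a \<in> dom (restr_free M (blueprint ord \<Omega> M) V)" by blast
    then show "c \<in> dom (blueprint ord \<Omega> ?L)" by (metis domIff on_spine)
  qed
qed

locale lambda_nf =
  fixes ord :: "'v \<Rightarrow> nat" and \<Omega> :: "'v \<Rightarrow> 'a form" and M :: "'v trm"
  assumes inj_ord: "inj ord" and NF: "in_LambdaNF ord \<Omega> M"
begin

abbreviation bp_within :: "'v set \<Rightarrow> 'a bp" where
  "bp_within V \<equiv> restr_free M (blueprint ord \<Omega> M) V"

lemma free_not_bound: "set (bvl M) \<inter> fv M = {}"
  and beta_normal_M: "beta_normal M" and typed_M: "\<exists>\<psi>. typed ord \<Omega> M \<psi>"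
  using NF by (auto simp: in_LambdaNF_def wfterm_def)

lemma HRM_subterm: "sub M a = Some N \<Longrightarrow> HRM ord N"
  using typed_M typed_sub typed_HRM by metis

lemma beta_normal_subterm: "sub M a = Some N \<Longrightarrow> beta_normal N"
  using beta_normal_M beta_normal_sub by metis

lemma fv_sub_iff_occurrence_below:
  assumes "x \<in> fv M" "sub M c = Some N"
  shows "x \<in> fv N \<longleftrightarrow> (\<exists>oc\<in>occurrences M x. prefix c oc)"
proof
  assume "x \<in> fv N"
  then obtain d where "sub N d = Some (Var x)" using fv_imp_occurrence by metis
  then have "c @ d \<in> occurrences M x" using assms(2) by (simp add: occurrences_def sub_append)
  then show "\<exists>oc\<in>occurrences M x. prefix c oc" by (blast intro: prefixI)
next
  assume "\<exists>oc\<in>occurrences M x. prefix c oc"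
  then obtain d where "sub M (c @ d) = Some (Var x)" by (auto simp: prefix_def occurrences_def)
  then have "sub N d = Some (Var x)" using assms(2) sub_append by metis
  moreover have "x \<notin> set (bvl N)" using assms free_not_bound bvl_sub by blast
  ultimately show "x \<in> fv N" using occurrence_imp_fv by metis
qed

lemma bp_within_Var:
  "V \<subseteq> fv M \<Longrightarrow> sub M c = Some (Var x) \<Longrightarrow> x \<in> V \<Longrightarrow> bp_within V c = Some (Fm (\<Omega> x))"
  by (simp add: restr_free_blueprint_eq node_sym_def the_typed_Var)

lemma bp_within_App:
  "V \<subseteq> fv M \<Longrightarrow> sub M c = Some (App P Q) \<Longrightarrow> fv (App P Q) \<subseteq> V \<Longrightarrow>
    \<exists>\<psi>. bp_within V c = Some (AppS \<psi>)"
  by (simp add: restr_free_blueprint_eq node_sym_def)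

lemma bp_within_not_None:
  "V \<subseteq> fv M \<Longrightarrow> bp_within V c \<noteq> None \<Longrightarrow>
    \<exists>N. sub M c = Some N \<and> fv N \<subseteq> V \<and> (\<forall>y L. N \<noteq> Lam y L)"
  by (auto simp: restr_free_blueprint_eq node_sym_def split: option.splits if_splits)

lemma bp_within_binary:
  assumes "V \<subseteq> fv M" "c \<in> dom (bp_within V)"
  shows "set c \<subseteq> {1, 2}"
proof -
  from assms have "sub M c \<noteq> None" using bp_within_not_None by blast
  then show ?thesis by (rule sub_binary)
qed

lemma bp_within_below_App:
  assumes V: "V \<subseteq> fv M" and p: "sub M p = Some (App P Q)" "fv (App P Q) \<subseteq> V"
  shows "\<exists>h. bp_within V (p @ 1 # h) \<noteq> None" and "\<exists>h. bp_within V (p @ 2 # h) \<noteq> None"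
proof -
  have "beta_normal P" "\<forall>y L. P \<noteq> Lam y L"
    using beta_normal_App beta_normal_subterm[OF p(1)] by auto
  then obtain k z where z: "sub P (replicate k 1) = Some (Var z)" "z \<in> fv P"
    using beta_normal_head_var by blast
  have "sub M (p @ 1 # replicate k 1) = Some (Var z)" using p(1) z(1) by (simp add: sub_append)
  with z(2) p(2) show "\<exists>h. bp_within V (p @ 1 # h) \<noteq> None" using bp_within_Var[OF V] by fastforce
  from z(2) obtain w where w: "w \<in> fv Q" using HRM_subterm[OF p(1)] by auto
  then obtain d where "sub Q d = Some (Var w)" using fv_imp_occurrence by metis
  then have "sub M (p @ 2 # d) = Some (Var w)" using p(1) by (simp add: sub_append)
  with w p(2) show "\<exists>h. bp_within V (p @ 2 # h) \<noteq> None" using bp_within_Var[OF V] by fastforce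
qed

lemma is_bp_bp_within:
  assumes V: "V \<subseteq> fv M"
  shows "is_bp (bp_within V)"
  unfolding is_bp_def
proof (intro conjI allI impI ballI)
  have "dom (bp_within V) \<subseteq> {a. sub M a \<noteq> None}" using bp_within_not_None[OF V] by fastforce
  then show "finite (dom (bp_within V))" using finite_sub_dom finite_subset by blast
next
  fix a k assume "a \<in> dom (bp_within V)" "k \<in> set a"
  then have "set a \<subseteq> {1, 2}" "k \<in> set a" using bp_within_binary[OF V] by auto
  then show "0 < k" by auto
next
  fix a \<phi> assume a: "bp_within V a = Some (AppS \<phi>)"
  then obtain N where N: "sub M a = Some N" "fv N \<subseteq> V"
    using bp_within_not_None[OF V] by blast
  with a have "node_sym ord \<Omega> N = Some (AppS \<phi>)" by (simp add: restr_free_blueprint_eq[OF V])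
  then obtain P Q where "N = App P Q" by (cases N) (auto simp: node_sym_def)
  with N have "sub M a = Some (App P Q)" "fv (App P Q) \<subseteq> V" by simp_all
  note children = bp_within_below_App[OF V this]
  from children(1) show "at_addr (bp_within V) (a @ [1]) \<noteq> Map.empty" using at_addr_nonempty by metis
  from children(2) show "at_addr (bp_within V) (a @ [2]) \<noteq> Map.empty" using at_addr_nonempty by metis
qed

lemma bp_within_empty: "bp_within {} = Map.empty"
proof
  fix c show "bp_within {} c = None"
  proof (cases "sub M c")
    case (Some N)
    show ?thesis
    proof (cases N)
      case (Var x) then show ?thesis using Some by (simp add: restr_free_blueprint_eq)
    next
      case (Lam y L) then show ?thesis using Some by (simp add: restr_free_blueprint_eq node_sym_def)
    next
      case (App P Q)
      then have "beta_normal P" "\<forall>y L. P \<noteq> Lam y L"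
        using beta_normal_App beta_normal_subterm[OF Some] by auto
      then have "fv P \<noteq> {}" using beta_normal_head_var by blast
      then show ?thesis using Some App by (simp add: restr_free_blueprint_eq)
    qed
  qed (simp add: restr_free_blueprint_eq)
qed

lemma bp_within_fv: "bp_within (fv M) = blueprint ord \<Omega> M"
  by (rule ext) (simp add: restr_free_blueprint_eq blueprint_eq)

subsection \<open>Extracting the occurrences of the greatest variable\<close>

definition pruned :: "'v set \<Rightarrow> addr set \<Rightarrow> 'a bp" where
  "pruned V E = bp_within V |` {c. \<forall>e\<in>E. \<not> prefix c e}"

lemma pruned_empty: "pruned V {} = bp_within V"
  by (simp add: pruned_def restrict_map_def)

lemma pruned_occurrences:
  assumes V: "V \<subseteq> fv M" and "x \<in> V"
  shows "pruned V (occurrences M x) = bp_within (V - {x})"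
proof
  fix c
  have "x \<in> fv M" "V - {x} \<subseteq> fv M" using assms by auto
  note bp_eqs = restr_free_blueprint_eq[OF V] restr_free_blueprint_eq[OF \<open>V - {x} \<subseteq> fv M\<close>]
  show "pruned V (occurrences M x) c = bp_within (V - {x}) c"
  proof (cases "sub M c")
    case (Some N)
    then have "(\<forall>e\<in>occurrences M x. \<not> prefix c e) \<longleftrightarrow> x \<notin> fv N"
      using fv_sub_iff_occurrence_below[OF \<open>x \<in> fv M\<close>] by blast
    with Some show ?thesis unfolding pruned_def restrict_map_def bp_eqs by auto
  qed (simp add: pruned_def restrict_map_def bp_eqs)
qed

lemma max_var_occurs_in_argument:
  assumes V: "V \<subseteq> fv M" and "x \<in> V" and x_max: "\<forall>y\<in>V. ord y \<le> ord x"
    and p: "sub M p = Some (App P Q)" "fv (App P Q) \<subseteq> V"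
    and left: "sub M (p @ 1 # r) = Some (Var x)"
  shows "\<exists>d. sub M (p @ 2 # d) = Some (Var x)"
proof -
  have P: "sub M (p @ [1]) = Some P" using p(1) by (simp add: sub_append)
  with left have "sub P r = Some (Var x)" using sub_append by fastforce
  moreover have "x \<notin> set (bvl P)"
    using V \<open>x \<in> V\<close> free_not_bound bvl_sub[OF P] by auto
  ultimately have "x \<in> fv P" by (rule occurrence_imp_fv)
  with HRM_subterm[OF p(1)] obtain w where w: "w \<in> fv Q" "ord x \<le> ord w" by auto
  from w(1) p(2) have "w \<in> V" by auto
  with x_max w(2) have "ord w = ord x" by (simp add: le_antisym)
  with inj_ord have "w = x" by (simp add: inj_eq)
  with w(1) obtain d where "sub Q d = Some (Var x)" using fv_imp_occurrence by metis
  then show ?thesis using p(1) by (auto simp: sub_append)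
qed

lemma append_1_less_append_2: "p @ 1 # u < p @ 2 # (v :: nat list)"
  by (induction p) auto

lemma right_branching_pruned:
  assumes V: "V \<subseteq> fv M" and "x \<in> V" and x_max: "\<forall>y\<in>V. ord y \<le> ord x"
    and oc: "oc \<in> occurrences M x - E" and oc_max: "\<forall>o'\<in>occurrences M x - E. o' \<le> oc"
  shows "right_branching (pruned V E) oc"
  unfolding right_branching_def
proof (intro allI impI)
  fix p k r assume oc_eq: "oc = p @ k # r" and "pruned V E p \<noteq> None"
  then have p_kept: "\<forall>e\<in>E. \<not> prefix p e" and "bp_within V p \<noteq> None"
    by (auto simp: pruned_def restrict_map_def split: if_splits)
  then obtain N where N: "sub M p = Some N" "fv N \<subseteq> V" "\<forall>y L. N \<noteq> Lam y L"
    using bp_within_not_None[OF V] by blast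
  have "sub N (k # r) = sub M oc" using sub_append[OF N(1), of "k # r"] oc_eq by simp
  also have "\<dots> = Some (Var x)" using oc by (simp add: occurrences_def)
  finally have "sub N (k # r) = Some (Var x)" .
  with N(3) obtain P Q where NPQ: "N = App P Q" and k: "k = 1 \<or> k = 2"
    by (cases N) (auto split: if_splits)
  with N have App: "sub M p = Some (App P Q)" "fv (App P Q) \<subseteq> V" by simp_all
  have "k = 2"
  proof (rule ccontr)
    assume "k \<noteq> 2"
    with k oc_eq oc have "sub M (p @ 1 # r) = Some (Var x)" by (simp add: occurrences_def)
    with max_var_occurs_in_argument[OF V \<open>x \<in> V\<close> x_max App]
    obtain d where "p @ 2 # d \<in> occurrences M x" by (auto simp: occurrences_def)
    moreover have "oc < p @ 2 # d" using oc_eq k \<open>k \<noteq> 2\<close> append_1_less_append_2 by simp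
    ultimately have "p @ 2 # d \<in> E" using oc_max by force
    moreover have "prefix p (p @ 2 # d)" by simp
    ultimately show False using p_kept by blast
  qed
  moreover have "\<exists>\<psi>. pruned V E p = Some (AppS \<psi>)"
    using bp_within_App[OF V App] p_kept by (simp add: pruned_def)
  moreover have "at_addr (pruned V E) (p @ [1]) \<noteq> Map.empty"
  proof -
    obtain h where "bp_within V (p @ 1 # h) \<noteq> None" using bp_within_below_App(1)[OF V App] by blast
    moreover have "\<forall>e\<in>E. \<not> prefix (p @ 1 # h) e" using p_kept by (auto dest: append_prefixD)
    ultimately have "pruned V E (p @ 1 # h) \<noteq> None" by (simp add: pruned_def)
    then show ?thesis by (rule at_addr_nonempty)
  qed
  ultimately show "k = 2 \<and> (\<exists>\<psi>. pruned V E p = Some (AppS \<psi>)) \<and> at_addr (pruned V E) (p @ [1]) \<noteq> Map.empty"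
    by blast
qed

lemma extr_pruned:
  assumes V: "V \<subseteq> fv M" and "x \<in> V" and x_max: "\<forall>y\<in>V. ord y \<le> ord x"
    and E: "E \<subseteq> occurrences M x"
    and oc: "oc \<in> occurrences M x - E" and oc_max: "\<forall>o'\<in>occurrences M x - E. o' \<le> oc"
  shows "extr (pruned V E) oc (\<Omega> x) (pruned V (insert oc E))"
proof -
  have oc_Var: "sub M oc = Some (Var x)" using oc by (simp add: occurrences_def)
  have "\<forall>e\<in>E. \<not> prefix oc e"
  proof (intro ballI notI)
    fix e assume "e \<in> E" "prefix oc e"
    then obtain d where "e = oc @ d" by (auto simp: prefix_def)
    moreover have "d \<noteq> []" using oc \<open>e \<in> E\<close> calculation by auto
    ultimately have "sub M e = None" using sub_Var_append[OF oc_Var] by simp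
    with \<open>e \<in> E\<close> E show False by (auto simp: occurrences_def)
  qed
  then have leaf: "pruned V E oc = Some (Fm (\<Omega> x))"
    using bp_within_Var[OF V oc_Var \<open>x \<in> V\<close>] by (simp add: pruned_def)
  have below: "\<forall>d. d \<noteq> [] \<longrightarrow> pruned V E (oc @ d) = None"
    using sub_Var_append[OF oc_Var] V by (simp add: pruned_def restrict_map_def restr_free_blueprint_eq)
  have "is_bp (pruned V E)"
    unfolding pruned_def by (rule is_bp_restrict_upclosed[OF is_bp_bp_within[OF V]])
      (auto dest: prefix_order.trans)
  moreover have "\<forall>c\<in>dom (pruned V E). set c \<subseteq> {1, 2}"
  proof
    fix c assume "c \<in> dom (pruned V E)"
    then have "c \<in> dom (bp_within V)" by (auto simp: pruned_def restrict_map_def split: if_splits)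
    then show "set c \<subseteq> {1, 2}" by (rule bp_within_binary[OF V])
  qed
  ultimately have "extr (pruned V E) oc (\<Omega> x) (pruned V E |` {c. \<not> prefix c oc})"
    using extr_right_branching leaf below right_branching_pruned[OF V \<open>x \<in> V\<close> x_max oc oc_max]
    by blast
  moreover have "pruned V E |` {c. \<not> prefix c oc} = pruned V (insert oc E)"
    unfolding pruned_def restrict_restrict by (rule arg_cong[where f = "restrict_map _"]) auto
  ultimately show ?thesis by simp
qed

lemma extr_chain_pruned:
  assumes V: "V \<subseteq> fv M" and "x \<in> V" and x_max: "\<forall>y\<in>V. ord y \<le> ord x"
    and "E \<subseteq> occurrences M x"
  shows "\<exists>as. distinct as \<and> set as = occurrences M x - E
    \<and> extr_chain (pruned V E) as (\<Omega> x) (pruned V (occurrences M x))"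
  using assms(4)
proof (induction "card (occurrences M x - E)" arbitrary: E)
  case 0
  then have "occurrences M x - E = {}" using finite_occurrences[of M x] by (simp add: card_eq_0_iff)
  with 0 have "E = occurrences M x" by blast
  then show ?case by (auto intro: exI[of _ "[]"])
next
  case (Suc m)
  let ?O = "occurrences M x - E"
  have fin: "finite ?O" by (rule finite_Diff[OF finite_occurrences])
  have "?O \<noteq> {}" using Suc.hyps(2) by (metis card.empty Zero_not_Suc)
  define oc where "oc = Max ?O"
  have oc: "oc \<in> ?O" and oc_max: "\<forall>o'\<in>?O. o' \<le> oc"
    using Max_in[OF fin \<open>?O \<noteq> {}\<close>] Max_ge[OF fin] by (simp_all add: oc_def)
  have "m = card (occurrences M x - insert oc E)"
    using Suc.hyps(2) oc fin by (metis Diff_insert card_Diff_singleton diff_Suc_1)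
  moreover have "insert oc E \<subseteq> occurrences M x" using Suc.prems oc by auto
  ultimately obtain as where "distinct as" "set as = occurrences M x - insert oc E"
    "extr_chain (pruned V (insert oc E)) as (\<Omega> x) (pruned V (occurrences M x))"
    using Suc.hyps(1) by blast
  moreover have "extr (pruned V E) oc (\<Omega> x) (pruned V (insert oc E))"
    using extr_pruned[OF V \<open>x \<in> V\<close> x_max Suc.prems oc oc_max] .
  ultimately show ?case using oc by (intro exI[of _ "oc # as"]) auto
qed

lemma extr_chain_occurrences:
  assumes V: "V \<subseteq> fv M" and "x \<in> V" and x_max: "\<forall>y\<in>V. ord y \<le> ord x"
  shows "\<exists>as. as \<noteq> [] \<and> distinct as \<and> set as = occurrences M x
    \<and> extr_chain (bp_within V) as (\<Omega> x) (bp_within (V - {x}))"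
proof -
  obtain as where as: "distinct as" "set as = occurrences M x"
    "extr_chain (bp_within V) as (\<Omega> x) (bp_within (V - {x}))"
    using extr_chain_pruned[OF assms, of "{}"]
    by (auto simp: pruned_empty pruned_occurrences[OF V \<open>x \<in> V\<close>])
  moreover have "as \<noteq> []"
    using as(2) occurrences_nonempty[of x M] V \<open>x \<in> V\<close> by auto
  ultimately show ?thesis by blast
qed

lemma extr_chain_occurrences_unique:
  assumes V: "V \<subseteq> fv M" and "x \<in> V" and "set bs = occurrences M x"
    and "extr_chain (bp_within V) bs (\<Omega> x) \<alpha>'"
  shows "\<alpha>' = bp_within (V - {x})"
proof -
  have "\<alpha>' = bp_within V |` {c. \<forall>b\<in>set bs. \<not> prefix c b}"
    using extr_chain_eq_restrict[OF assms(4)] .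
  also have "\<dots> = pruned V (occurrences M x)" using assms(3) by (simp add: pruned_def)
  finally show ?thesis using pruned_occurrences[OF V \<open>x \<in> V\<close>] by simp
qed

abbreviation free_vars :: "'v list" where
  "free_vars \<equiv> freelist ord M"

lemma set_free_vars: "set free_vars = fv M"
  and sorted_free_vars: "sorted_wrt (\<lambda>x y. ord x < ord y) free_vars"
  using set_sorted_freelist[OF inj_ord] by auto

lemma distinct_free_vars: "distinct free_vars"
  using sorted_free_vars by (metis (no_types, lifting) sorted_wrt_iff_nth_less distinct_conv_nth
    less_irrefl nat_neq_iff)

lemma fv_lams_drop_free_vars: "fv (lams (drop i free_vars) M) = set (take i free_vars)"
proof -
  have "fv M = set (take i free_vars) \<union> set (drop i free_vars)"
    using set_free_vars by (metis append_take_drop_id set_append)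
  moreover have "set (take i free_vars) \<inter> set (drop i free_vars) = {}"
    using distinct_free_vars by (metis append_take_drop_id distinct_append)
  ultimately show ?thesis by (auto simp: fv_lams)
qed

lemma set_take_free_vars: "set (take i free_vars) \<subseteq> fv M"
  using set_free_vars set_take_subset by metis

lemma take_Suc_free_vars:
  assumes "i < length free_vars"
  shows "free_vars ! i \<in> set (take (Suc i) free_vars)"
    and "set (take (Suc i) free_vars) - {free_vars ! i} = set (take i free_vars)"
    and "\<forall>y\<in>set (take (Suc i) free_vars). ord y \<le> ord (free_vars ! i)"
proof -
  have take: "take (Suc i) free_vars = take i free_vars @ [free_vars ! i]"
    using assms by (rule take_Suc_conv_app_nth)
  then show "free_vars ! i \<in> set (take (Suc i) free_vars)" by simp
  have "distinct (take (Suc i) free_vars)" using distinct_free_vars by simp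
  with take show "set (take (Suc i) free_vars) - {free_vars ! i} = set (take i free_vars)" by auto
  show "\<forall>y\<in>set (take (Suc i) free_vars). ord y \<le> ord (free_vars ! i)"
  proof
    fix y assume "y \<in> set (take (Suc i) free_vars)"
    then obtain j where "j < Suc i" "y = free_vars ! j"
      using assms by (auto simp: in_set_conv_nth)
    show "ord y \<le> ord (free_vars ! i)"
    proof (cases "j = i")
      case False
      with \<open>j < Suc i\<close> have "j < i" by simp
      with assms sorted_free_vars have "ord (free_vars ! j) < ord (free_vars ! i)"
        by (simp add: sorted_wrt_iff_nth_less)
      with \<open>y = free_vars ! j\<close> show ?thesis by simp
    qed (use \<open>y = free_vars ! j\<close> in simp)
  qed
qed

lemma blueprint_lams_free_vars:
  "dom (blueprint ord \<Omega> (lams (drop i free_vars) M))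
      = (\<lambda>a. replicate (length free_vars - i) 1 @ a) ` dom (bp_within (set (take i free_vars)))
   \<and> at_addr (blueprint ord \<Omega> (lams (drop i free_vars) M)) (replicate (length free_vars - i) 1)
      = bp_within (set (take i free_vars))"
  using blueprint_lams[OF fv_lams_drop_free_vars set_take_free_vars, where ord = ord and \<Omega> = \<Omega>]
  by simp

lemma extraction_step_free_vars:
  assumes "i \<in> {1..length free_vars}"
  shows "(\<exists>as. as \<noteq> [] \<and> distinct as \<and> set as = occurrences M (free_vars ! (i - 1))
        \<and> extr_chain (bp_within (set (take i free_vars))) as (\<Omega> (free_vars ! (i - 1)))
                     (bp_within (set (take (i - 1) free_vars))))
    \<and> (\<forall>bs \<alpha>'. bs \<noteq> [] \<and> distinct bs \<and> set bs = occurrences M (free_vars ! (i - 1))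
        \<and> extr_chain (bp_within (set (take i free_vars))) bs (\<Omega> (free_vars ! (i - 1))) \<alpha>'
        \<longrightarrow> \<alpha>' = bp_within (set (take (i - 1) free_vars)))"
proof -
  from assms obtain j where j: "i = Suc j" "j < length free_vars" by (cases i) auto
  note step = take_Suc_free_vars[OF j(2)]
  show ?thesis
    using extr_chain_occurrences[OF set_take_free_vars step(1,3)]
      extr_chain_occurrences_unique[OF set_take_free_vars step(1)]
    unfolding step(2) j(1) by auto
qed

lemma inF_take_free_vars:
  "i \<le> length free_vars \<Longrightarrow> inF (bp_within (set (take i free_vars))) (map \<Omega> (take i free_vars))"
proof (induction i)
  case 0
  then show ?case using bp_within_empty inF_nil by simp
next
  case (Suc i)
  then have i: "i < length free_vars" by simp
  note step = take_Suc_free_vars[OF i]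
  obtain a as where "extr_chain (bp_within (set (take (Suc i) free_vars))) (a # as)
      (\<Omega> (free_vars ! i)) (bp_within (set (take i free_vars)))"
    using extr_chain_occurrences[OF set_take_free_vars step(1,3)] step(2)
    by (metis neq_Nil_conv)
  then have "(extr_any (\<Omega> (free_vars ! i)))\<^sup>+\<^sup>+ (bp_within (set (take (Suc i) free_vars)))
      (bp_within (set (take i free_vars)))"
    by (rule extr_chain_tranclp)
  from inF_snoc[OF this] Suc show ?case by (simp add: take_Suc_conv_app_nth)
qed

lemma free_vars_in_FF: "map \<Omega> free_vars \<in> FF (blueprint ord \<Omega> M)"
  using inF_take_free_vars[of "length free_vars"] by (simp add: FF_def bp_within_fv set_free_vars)

end

theorem lemma2p15:
  fixes ord :: "'v \<Rightarrow> nat" and \<Omega> :: "'v \<Rightarrow> 'a form" and M :: "'v trm"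
    and \<alpha> :: "'a bp" and xs :: "'v list"
  assumes O_inj: "inj ord"
    and X_inf: "infinite (UNIV :: 'v set)"
    and \<Omega>_inf: "\<And>\<phi>. infinite (\<Omega> -` {\<phi>})"
    and M_NF: "in_LambdaNF ord \<Omega> M"
    and \<alpha>_def: "\<alpha> = blueprint ord \<Omega> M"
    and xs_def: "xs = freelist ord M"
  shows
    "(\<forall>i \<le> length xs.
        dom (blueprint ord \<Omega> (lams (drop i xs) M))
          = (\<lambda>a. replicate (length xs - i) 1 @ a) ` dom (restr_free M \<alpha> (set (take i xs)))
      \<and> at_addr (blueprint ord \<Omega> (lams (drop i xs) M)) (replicate (length xs - i) 1)
          = restr_free M \<alpha> (set (take i xs)))
   \<and> (\<forall>i \<in> {1..length xs}.
        (\<exists>as. as \<noteq> [] \<and> distinct as \<and> set as = {a. sub M a = Some (Var (xs ! (i - 1)))}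
           \<and> extr_chain (restr_free M \<alpha> (set (take i xs))) as (\<Omega> (xs ! (i - 1)))
                        (restr_free M \<alpha> (set (take (i - 1) xs))))
      \<and> (\<forall>bs \<alpha>'. bs \<noteq> [] \<and> distinct bs \<and> set bs = {a. sub M a = Some (Var (xs ! (i - 1)))}
           \<and> extr_chain (restr_free M \<alpha> (set (take i xs))) bs (\<Omega> (xs ! (i - 1))) \<alpha>'
           \<longrightarrow> \<alpha>' = restr_free M \<alpha> (set (take (i - 1) xs))))
   \<and> map \<Omega> xs \<in> FF \<alpha>"
proof -
  interpret lambda_nf ord \<Omega> M using O_inj M_NF by unfold_locales
  show ?thesis
    unfolding \<alpha>_def xs_def
    using blueprint_lams_free_vars extraction_step_free_vars[unfolded occurrences_def] free_vars_in_FF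
    by blast
qed

end
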